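(* Assume $d(\eta,\cdot)$ attains its minimum over $\mathcal G$ at $g^*=g^{(\theta^* )}$ with $\theta^*\neq0$, and let $g^{bf}$ be the maximum-entropy element of $P$. Let $g^{ds}\in\Delta_k^n$ be any OCDS prediction and $g^{ds*}=g^{ds}(w^*,b^*_{1:p})$ (assuming its parameters lie in $(0,1)$). If $$\|\epsilon\|_\infty\le\frac{d(\eta,g^{ds*})-d(\eta,g^* )+d(\eta,g^{ds})-d(\eta,g^{ds*})}{2\|\theta^*\|_1},$$ then $d(\eta,g^{bf})\le d(\eta,g^{ds})$.
   Context: Standard setup. Let $n\ge1$, $k\ge2$, $p\ge1$ be integers and $m=p+k$. There are $n$ data points $x_1,\dots,x_n$ and $p$ rules $h^{(1)},\dots,h^{(p)}$, each a map from $\{x_1,\dots,x_n\}$ to $\{1,\dots,k\}\cup\{?\}$, where "?" means abstain. Let $n_j\ge1$ be the number of indices $i$ with $h^{(j)}(x_i)\neq ?$. $\Delta_k$ denotes the probability simplex in $\mathbb{R}^k$; an element $z\in\Delta_k^n\subset\mathbb{R}^{nk}$ is written $z=(z_1,\dots,z_n)$ with $z_i=(z_{i1},\dots,z_{ik})\in\Delta_k$. For $j\le p$ let $h^{(j)}\in\{0,1\}^{nk}$ also denote the vector with $h^{(j)}_{i\ell}=1$ iff $h^{(j)}(x_i)=\ell$; for $\ell\le k$ let $\vec e^{\,n}_\ell\in\{0,1\}^{nk}$ have entries $(\vec e^{\,n}_\ell)_{i\ell'}=\mathbf 1(\ell'=\ell)$. The matrix $A\in\mathbb{R}^{m\times nk}$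 has rows $a^{(j)}=h^{(j)}/n_j$ for $1\le j\le p$ and $a^{(p+\ell)}=\vec e^{\,n}_\ell/n$ for $1\le\ell\le k$. For $\theta\in\mathbb{R}^m$ put $a^{(\theta)}=A^\top\theta\in\mathbb{R}^{nk}$ (entries $a^{(\theta)}_{i\ell}$) and define $g^{(\theta)}\in\Delta_k^n$ by $g^{(\theta)}_{i\ell}=\exp(a^{(\theta)}_{i\ell})/\sum_{\ell'=1}^k\exp(a^{(\theta)}_{i\ell'})$; let $\mathcal G=\{g^{(\theta)}:\theta\in\mathbb{R}^m\}$. A fixed "true labeling" $\eta\in\Delta_k^n$ is given and $b^*:=A\eta\in\mathbb{R}^m$; write $b^*_j$ ($j\le p$) for the empirical rule accuracies and $w^*_\ell:=b^*_{p+\ell}$ for the empirical class frequencies. Given $b\in\mathbb{R}^m$ and $\epsilon\in\mathbb{R}^m$ with $\epsilon\ge0$ and $b-\epsilon\le b^*\le b+\epsilon$ (entrywise), let $P=\{z\in\Delta_k^n:\ b-\epsilon\le Az\le b+\epsilon\}$ (entrywise). The maximum-entropy element of $P$ is the unique minimizer of $\sum_{i,\ell}z_{i\ell}\log z_{i\ell}$ over $P$ (with $0\log0=0$). For $\mu,\nu\in\Delta_k^n$, $d(\mu,\nu)=\sum_{i=1}^n\mathrm{KL}(\mu_i\|\nu_i)=\sum_{i,\ell}\mu_{i\ell}\log(\mu_{i\ell}/\nu_{i\ell})$, with $0\log(0/x)=0$. One-coin Dawid–Skene (OCDS) prediction: for class frequencies $w\in\Delta_k$ and rule accuracies $b\in(0,1)^p$,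 $g^{ds}(w,b)\in\Delta_k^n$ is defined by $g^{ds}(w,b)_{i\ell}=\widehat g_{i\ell}/\sum_{\ell'}\widehat g_{i\ell'}$ where $\widehat g_{i\ell}=w_\ell\prod_{j:\,h^{(j)}(x_i)=\ell}b_j\prod_{j:\,h^{(j)}(x_i)\notin\{\ell,?\}}\frac{1-b_j}{k-1}$; an OCDS prediction is any $g^{ds}(w,b)$ of this form or a limit in $\Delta_k^n$ of such. *)

theory Defs
  imports "HOL-Analysis.Analysis"
begin

text \<open>Conventions: data points are indexed by i < n, classes by l < k (0-based),
  rules by j < p; the rows of A are indexed by j < p (rules) and p + l, l < k (classes).
  A rule is h :: nat => nat => nat option with h j i = None meaning abstain and
  h j i = Some l meaning label l.  Elements of R^{nk} are functions nat => nat => real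
  (only entries i < n, l < k matter); elements of R^m are functions nat => real.\<close>

definition in_simplex :: "nat \<Rightarrow> (nat \<Rightarrow> real) \<Rightarrow> bool" where
  "in_simplex k v \<longleftrightarrow> (\<forall>l<k. 0 \<le> v l) \<and> (\<Sum>l<k. v l) = 1"

definition simplexn :: "nat \<Rightarrow> nat \<Rightarrow> (nat \<Rightarrow> nat \<Rightarrow> real) \<Rightarrow> bool" where
  "simplexn n k z \<longleftrightarrow> (\<forall>i<n. in_simplex k (z i))"

definition nrule :: "nat \<Rightarrow> (nat \<Rightarrow> nat \<Rightarrow> nat option) \<Rightarrow> nat \<Rightarrow> nat" where
  "nrule n h j = card {i. i < n \<and> h j i \<noteq> None}"

definition hvec :: "(nat \<Rightarrow> nat \<Rightarrow> nat option) \<Rightarrow> nat \<Rightarrow> nat \<Rightarrow> nat \<Rightarrow> real" where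
  "hvec h j i l = (if h j i = Some l then 1 else 0)"

definition Amat :: "nat \<Rightarrow> nat \<Rightarrow> (nat \<Rightarrow> nat \<Rightarrow> nat option) \<Rightarrow> nat \<Rightarrow> nat \<Rightarrow> nat \<Rightarrow> real" where
  "Amat n p h j i l =
     (if j < p then hvec h j i l / real (nrule n h j)
      else if l = j - p then 1 / real n else 0)"

definition Aop :: "nat \<Rightarrow> nat \<Rightarrow> nat \<Rightarrow> (nat \<Rightarrow> nat \<Rightarrow> nat option)
    \<Rightarrow> (nat \<Rightarrow> nat \<Rightarrow> real) \<Rightarrow> nat \<Rightarrow> real" where
  "Aop n k p h z j = (\<Sum>i<n. \<Sum>l<k. Amat n p h j i l * z i l)"

definition atheta :: "nat \<Rightarrow> nat \<Rightarrow> nat \<Rightarrow> (nat \<Rightarrow> nat \<Rightarrow> nat option)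
    \<Rightarrow> (nat \<Rightarrow> real) \<Rightarrow> nat \<Rightarrow> nat \<Rightarrow> real" where
  "atheta n k p h \<theta> i l = (\<Sum>j<p+k. Amat n p h j i l * \<theta> j)"

definition gtheta :: "nat \<Rightarrow> nat \<Rightarrow> nat \<Rightarrow> (nat \<Rightarrow> nat \<Rightarrow> nat option)
    \<Rightarrow> (nat \<Rightarrow> real) \<Rightarrow> nat \<Rightarrow> nat \<Rightarrow> real" where
  "gtheta n k p h \<theta> i l =
     exp (atheta n k p h \<theta> i l) / (\<Sum>l'<k. exp (atheta n k p h \<theta> i l'))"

definition klterm :: "real \<Rightarrow> real \<Rightarrow> ereal" where
  "klterm \<mu> \<nu> = (if \<mu> = 0 then 0 else if \<nu> = 0 then \<infinity> else ereal (\<mu> * ln (\<mu> / \<nu>)))"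

definition dKL :: "nat \<Rightarrow> nat \<Rightarrow> (nat \<Rightarrow> nat \<Rightarrow> real) \<Rightarrow> (nat \<Rightarrow> nat \<Rightarrow> real) \<Rightarrow> ereal" where
  "dKL n k \<mu> \<nu> = (\<Sum>i<n. \<Sum>l<k. klterm (\<mu> i l) (\<nu> i l))"

definition negent :: "nat \<Rightarrow> nat \<Rightarrow> (nat \<Rightarrow> nat \<Rightarrow> real) \<Rightarrow> real" where
  "negent n k z = (\<Sum>i<n. \<Sum>l<k. (if z i l = 0 then 0 else z i l * ln (z i l)))"

definition polyP :: "nat \<Rightarrow> nat \<Rightarrow> nat \<Rightarrow> (nat \<Rightarrow> nat \<Rightarrow> nat option)
    \<Rightarrow> (nat \<Rightarrow> real) \<Rightarrow> (nat \<Rightarrow> real) \<Rightarrow> (nat \<Rightarrow> nat \<Rightarrow> real) \<Rightarrow> bool" where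
  "polyP n k p h b \<epsilon> z \<longleftrightarrow> simplexn n k z \<and>
     (\<forall>j<p+k. b j - \<epsilon> j \<le> Aop n k p h z j \<and> Aop n k p h z j \<le> b j + \<epsilon> j)"

text \<open>Maximum-entropy element of P: the minimizer of the negative entropy over P
  (unique by strict convexity).\<close>
definition is_maxent :: "nat \<Rightarrow> nat \<Rightarrow> nat \<Rightarrow> (nat \<Rightarrow> nat \<Rightarrow> nat option)
    \<Rightarrow> (nat \<Rightarrow> real) \<Rightarrow> (nat \<Rightarrow> real) \<Rightarrow> (nat \<Rightarrow> nat \<Rightarrow> real) \<Rightarrow> bool" where
  "is_maxent n k p h b \<epsilon> g \<longleftrightarrow> polyP n k p h b \<epsilon> g \<and>
     (\<forall>z. polyP n k p h b \<epsilon> z \<longrightarrow> negent n k g \<le> negent n k z)"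

definition ghat :: "nat \<Rightarrow> nat \<Rightarrow> (nat \<Rightarrow> nat \<Rightarrow> nat option)
    \<Rightarrow> (nat \<Rightarrow> real) \<Rightarrow> (nat \<Rightarrow> real) \<Rightarrow> nat \<Rightarrow> nat \<Rightarrow> real" where
  "ghat k p h w b i l =
     w l * (\<Prod>j\<in>{j. j < p \<and> h j i = Some l}. b j)
         * (\<Prod>j\<in>{j. j < p \<and> h j i \<noteq> Some l \<and> h j i \<noteq> None}. (1 - b j) / (real k - 1))"

definition gds :: "nat \<Rightarrow> nat \<Rightarrow> (nat \<Rightarrow> nat \<Rightarrow> nat option)
    \<Rightarrow> (nat \<Rightarrow> real) \<Rightarrow> (nat \<Rightarrow> real) \<Rightarrow> nat \<Rightarrow> nat \<Rightarrow> real" where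
  "gds k p h w b i l = ghat k p h w b i l / (\<Sum>l'<k. ghat k p h w b i l')"

text \<open>OCDS prediction: an element of Delta_k^n that is a (pointwise) limit of
  OCDS predictions g^ds(w,b) with w in Delta_k and b in (0,1)^p
  (constant sequences give the exact form).\<close>
definition is_ocds :: "nat \<Rightarrow> nat \<Rightarrow> nat \<Rightarrow> (nat \<Rightarrow> nat \<Rightarrow> nat option)
    \<Rightarrow> (nat \<Rightarrow> nat \<Rightarrow> real) \<Rightarrow> bool" where
  "is_ocds n k p h g \<longleftrightarrow> simplexn n k g \<and>
     (\<exists>ws bs. (\<forall>t::nat. in_simplex k (ws t) \<and> (\<forall>j<p. 0 < bs t j \<and> bs t j < 1)) \<and>
        (\<forall>i<n. \<forall>l<k. (\<lambda>t. gds k p h (ws t) (bs t) i l) \<longlonglongrightarrow> g i l))"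

end

theory Submission
  imports Defs
begin

text \<open>The maximum-entropy element \<open>g\<^sub>b\<^sub>f\<close> is the I-projection onto the convex set \<open>P\<close>,
  so every \<open>e \<in> P\<close>, in particular \<open>\<eta>\<close>, satisfies the Pythagorean inequality
  \<open>KL(e \<parallel> g\<^sub>b\<^sub>f) \<le> negent e - negent g\<^sub>b\<^sub>f\<close>; it comes from first-order optimality of
  \<open>g\<^sub>b\<^sub>f\<close> along the segment towards \<open>e\<close>, once \<open>g\<^sub>b\<^sub>f\<close> is known to be positive wherever
  \<open>e\<close> is. For the exponential-family member \<open>g\<^sup>* = g\<^sup>(\<^sup>\<theta>\<^sup>*\<^sup>)\<close> one has
  \<open>\<Sum> z ln g\<^sup>* = \<theta>\<^sup>* \<bullet> A z - const\<close>, so Gibbs' inequality for \<open>g\<^sub>b\<^sub>f\<close> together with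
  \<open>\<parallel>A \<eta> - A g\<^sub>b\<^sub>f\<parallel>\<^sub>\<infinity> \<le> 2 \<parallel>\<epsilon>\<parallel>\<^sub>\<infinity>\<close> gives
  \<open>KL(\<eta> \<parallel> g\<^sub>b\<^sub>f) \<le> KL(\<eta> \<parallel> g\<^sup>*) + 2 \<parallel>\<epsilon>\<parallel>\<^sub>\<infinity> \<parallel>\<theta>\<^sup>*\<parallel>\<^sub>1\<close>, and the hypothesis on \<open>\<epsilon>\<close> bounds
  the right-hand side by \<open>KL(\<eta> \<parallel> g\<^sub>d\<^sub>s)\<close>.\<close>

definition xlnx :: "real \<Rightarrow> real" where
  "xlnx x = (if x = 0 then 0 else x * ln x)"

definition relent :: "real \<Rightarrow> real \<Rightarrow> real" where
  "relent a b = (if a = 0 then 0 else a * ln (a / b))"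

lemma relent_eq_xlnx_minus: "0 < a \<Longrightarrow> 0 < b \<Longrightarrow> relent a b = xlnx a - a * ln b"
  by (simp add: relent_def xlnx_def ln_div algebra_simps)

lemma mult_ln_le_diff:
  fixes x y :: real
  assumes "0 < x" "0 < y"
  shows "x * (ln y - ln x) \<le> y - x"
proof -
  have "ln (y / x) \<le> y / x - 1" using assms by (intro ln_le_minus_one) simp
  hence "x * (ln y - ln x) \<le> x * (y / x - 1)"
    using assms by (intro mult_left_mono) (auto simp: ln_div)
  thus ?thesis using assms by (simp add: algebra_simps)
qed

lemma xlnx_tangent:
  assumes "0 < z" "0 \<le> g"
  shows "xlnx z - xlnx g \<le> (1 + ln z) * (z - g)"
proof (cases "g = 0")
  case True thus ?thesis using assms by (simp add: xlnx_def algebra_simps)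
next
  case False
  hence "g * (ln z - ln g) \<le> z - g" using assms by (intro mult_ln_le_diff) auto
  thus ?thesis using assms False by (simp add: xlnx_def algebra_simps)
qed

lemma xlnx_minus_mult_ln_ge:
  assumes "0 < q" "0 \<le> z"
  shows "z - q \<le> xlnx z - z * ln q"
proof (cases "z = 0")
  case True thus ?thesis using assms by (simp add: xlnx_def)
next
  case False
  hence "z * (ln q - ln z) \<le> q - z" using assms by (intro mult_ln_le_diff) auto
  thus ?thesis using False by (simp add: xlnx_def algebra_simps)
qed

lemma relent_ge_diff:
  assumes "0 \<le> a" "0 \<le> b" "0 < a \<Longrightarrow> 0 < b"
  shows "a - b \<le> relent a b"
proof (cases "a = 0")
  case True thus ?thesis using assms by (simp add: relent_def)
next
  case False
  hence "0 < a" "0 < b" using assms by auto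
  thus ?thesis using xlnx_minus_mult_ln_ge[of b a] relent_eq_xlnx_minus by simp
qed

lemma convex_comb_nonneg:
  fixes g e t :: real
  assumes "0 \<le> g" "0 \<le> e" "0 < t" "t < 1"
  shows "0 \<le> (1 - t) * g + t * e" and "(1 - t) * g + t * e = 0 \<longleftrightarrow> g = 0 \<and> e = 0"
proof -
  have "0 \<le> (1 - t) * g" "0 \<le> t * e" using assms by simp_all
  thus "0 \<le> (1 - t) * g + t * e" by simp
  show "(1 - t) * g + t * e = 0 \<longleftrightarrow> g = 0 \<and> e = 0"
    using \<open>0 \<le> (1 - t) * g\<close> \<open>0 \<le> t * e\<close> assms by (auto simp: add_nonneg_eq_0_iff)
qed

lemma xlnx_convex_comb_le:
  assumes e: "0 \<le> e" and g: "0 \<le> g" and t: "0 < t" "t < 1" and z: "z = (1 - t) * g + t * e"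
  shows "xlnx z - xlnx g \<le> t * ((e - g) + (e - g) * ln z)"
proof (cases "z = 0")
  case True
  hence "e = 0" "g = 0" using convex_comb_nonneg(2)[OF g e t] z by simp_all
  thus ?thesis using True by (simp add: xlnx_def)
next
  case False
  hence "0 < z" using convex_comb_nonneg(1)[OF g e t] z by simp
  hence "xlnx z - xlnx g \<le> (1 + ln z) * (z - g)" using g by (rule xlnx_tangent)
  also have "z - g = t * (e - g)" using z by (simp add: algebra_simps)
  finally show ?thesis by (simp add: algebra_simps)
qed

text \<open>The first-order term \<open>(e - g) ln z\<close> is kept apart because its sum over the
  entropy maximiser is nonnegative (\<open>maxent_first_order\<close>).\<close>
lemma relent_convex_comb_le:
  assumes e: "0 \<le> e" and g: "0 \<le> g" and t: "0 < t" "t < 1" and z: "z = (1 - t) * g + t * e"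
  shows "relent e z \<le> xlnx e - xlnx g - g * ln (1 - t) - (e - g) * ln z"
proof (cases "z = 0")
  case True
  hence "e = 0" "g = 0" using convex_comb_nonneg(2)[OF g e t] z by simp_all
  thus ?thesis by (simp add: relent_def xlnx_def)
next
  case False
  hence zp: "0 < z" using convex_comb_nonneg(1)[OF g e t] z by simp
  have relent_z: "relent e z = xlnx e - e * ln z"
    using relent_eq_xlnx_minus[OF _ zp] e by (cases "e = 0") (auto simp: relent_def xlnx_def)
  have "xlnx g + g * ln (1 - t) \<le> g * ln z"
  proof (cases "g = 0")
    case True thus ?thesis by (simp add: xlnx_def)
  next
    case False
    have "(1 - t) * g \<le> z" using z t e by simp
    hence "ln ((1 - t) * g) \<le> ln z" using False g t zp by (subst ln_le_cancel_iff) auto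
    hence "g * (ln (1 - t) + ln g) \<le> g * ln z"
      using False g t by (intro mult_left_mono) (auto simp: ln_mult)
    thus ?thesis using False by (simp add: xlnx_def algebra_simps)
  qed
  thus ?thesis using relent_z by (simp add: algebra_simps)
qed

lemma relent_le_relent_convex_comb:
  assumes e: "0 \<le> e" and g: "0 \<le> g" "0 < e \<Longrightarrow> 0 < g" and t: "0 < t" "t < 1"
    and z: "z = (1 - t) * g + t * e"
  shows "relent e g \<le> relent e z + t * (e * e / g)"
proof (cases "e = 0")
  case True thus ?thesis by (simp add: relent_def)
next
  case False
  hence ep: "0 < e" and gp: "0 < g" using e g by auto
  hence zp: "0 < z"
    using convex_comb_nonneg[OF g(1) e t] z by (metis less_eq_real_def)
  have "g * (ln z - ln g) \<le> z - g" using gp zp by (rule mult_ln_le_diff)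
  also have "\<dots> \<le> t * e"
    using mult_nonneg_nonneg[of t g] t g unfolding z by (simp add: algebra_simps)
  finally have "ln z - ln g \<le> t * e / g" using gp by (simp add: field_simps)
  hence "e * (ln z - ln g) \<le> e * (t * e / g)" using ep by (intro mult_left_mono) auto
  thus ?thesis using relent_eq_xlnx_minus[OF ep gp] relent_eq_xlnx_minus[OF ep zp]
    by (simp add: algebra_simps)
qed

lemma le_of_le_add_mult_small:
  fixes x B K :: real
  assumes "0 \<le> K" and le: "\<And>t. 0 < t \<Longrightarrow> t \<le> 1/2 \<Longrightarrow> x \<le> B + t * K"
  shows "x \<le> B"
proof (rule field_le_epsilon)
  fix \<delta> :: real assume "0 < \<delta>"
  define t where "t = min (1/2) (\<delta> / (K + 1))"
  have t: "0 < t" "t \<le> 1/2" "t \<le> \<delta> / (K + 1)"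
    using \<open>0 < \<delta>\<close> \<open>0 \<le> K\<close> unfolding t_def by (simp_all only: min.cobounded1 min.cobounded2) simp
  have "t * K \<le> \<delta> / (K + 1) * K" using t \<open>0 \<le> K\<close> by (intro mult_right_mono) auto
  also have "\<dots> \<le> \<delta>" using \<open>0 < \<delta>\<close> \<open>0 \<le> K\<close> by (simp add: field_simps)
  finally show "x \<le> B + \<delta>" using le[OF t(1,2)] by simp
qed

lemma ereal_diff_add_diff_cancel: "ereal a - ereal b + X - ereal a = X - ereal b"
  by (cases X) auto

lemma ereal_add_mult_le_of_le_divide:
  fixes M D c :: real and X :: ereal
  assumes "0 < c" and le: "ereal M \<le> (X - ereal D) / ereal c"
  shows "ereal (D + M * c) \<le> X"
proof (cases X)
  case (real r)
  hence "M \<le> (r - D) / c" using le \<open>0 < c\<close> by simp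
  thus ?thesis using real \<open>0 < c\<close> by (simp add: pos_le_divide_eq algebra_simps)
next
  case MInf
  have "(X - ereal D) / ereal c = -\<infinity>" using MInf \<open>0 < c\<close> by simp
  thus ?thesis using le \<open>0 < c\<close> by simp
qed simp

lemma simplexn_nonneg: "simplexn n k z \<Longrightarrow> i < n \<Longrightarrow> l < k \<Longrightarrow> 0 \<le> z i l"
  by (simp add: simplexn_def in_simplex_def)

lemma simplexn_sum: "simplexn n k z \<Longrightarrow> i < n \<Longrightarrow> (\<Sum>l<k. z i l) = 1"
  by (simp add: simplexn_def in_simplex_def)

lemma sum_sum_diff_eq_0:
  "simplexn n k e \<Longrightarrow> simplexn n k g \<Longrightarrow> (\<Sum>i<n. \<Sum>l<k. e i l - g i l) = 0"
  by (simp add: simplexn_sum sum_subtractf)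

lemma negent_eq_sum_xlnx: "negent n k z = (\<Sum>i<n. \<Sum>l<k. xlnx (z i l))"
  by (simp add: negent_def xlnx_def)

lemma nested_sum_member_le:
  fixes d :: "nat \<Rightarrow> nat \<Rightarrow> real"
  assumes "\<And>i l. i < n \<Longrightarrow> l < k \<Longrightarrow> 0 \<le> d i l" "i0 < n" "l0 < k"
  shows "d i0 l0 \<le> (\<Sum>i<n. \<Sum>l<k. d i l)"
proof -
  have "d i0 l0 \<le> (\<Sum>l<k. d i0 l)" using assms by (intro member_le_sum) auto
  also have "\<dots> \<le> (\<Sum>i<n. \<Sum>l<k. d i l)" using assms by (intro member_le_sum sum_nonneg) auto
  finally show ?thesis .
qed

definition mix :: "real \<Rightarrow> (nat \<Rightarrow> nat \<Rightarrow> real) \<Rightarrow> (nat \<Rightarrow> nat \<Rightarrow> real) \<Rightarrow> nat \<Rightarrow> nat \<Rightarrow> real"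
  where "mix t g e i l = (1 - t) * g i l + t * e i l"

lemma simplexn_mix:
  assumes "simplexn n k g" "simplexn n k e" "0 \<le> t" "t \<le> 1"
  shows "simplexn n k (mix t g e)"
  using assms unfolding simplexn_def in_simplex_def mix_def
  by (simp add: sum.distrib sum_distrib_left[symmetric])

lemma Aop_mix: "Aop n k p h (mix t g e) j = (1 - t) * Aop n k p h g j + t * Aop n k p h e j"
proof -
  have "Amat n p h j i l * mix t g e i l
      = (1 - t) * (Amat n p h j i l * g i l) + t * (Amat n p h j i l * e i l)" for i l
    by (simp add: mix_def algebra_simps)
  thus ?thesis by (simp only: Aop_def sum.distrib sum_distrib_left[symmetric])
qed

lemma polyP_mix:
  assumes "polyP n k p h b \<epsilon> g" "polyP n k p h b \<epsilon> e" "0 \<le> t" "t \<le> 1"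
  shows "polyP n k p h b \<epsilon> (mix t g e)"
proof -
  have "(1 - t) *\<^sub>R Aop n k p h g j + t *\<^sub>R Aop n k p h e j \<in> {b j - \<epsilon> j .. b j + \<epsilon> j}"
    if "j < p + k" for j
    using assms that unfolding polyP_def by (intro convexD[OF convex_real_interval(5)]) auto
  thus ?thesis using assms simplexn_mix by (auto simp: polyP_def Aop_mix)
qed

text \<open>First-order optimality of the entropy maximiser \<open>g\<close> in the direction of \<open>e\<close>,
  evaluated at the point \<open>mix t g e\<close> rather than at \<open>g\<close>, where \<open>ln\<close> might be \<open>-\<infinity>\<close>.\<close>
lemma maxent_first_order:
  assumes Pe: "polyP n k p h b \<epsilon> e" and mx: "is_maxent n k p h b \<epsilon> g" and t: "0 < t" "t < 1"
  shows "0 \<le> (\<Sum>i<n. \<Sum>l<k. (e i l - g i l) * ln (mix t g e i l))"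
proof -
  have Pg: "polyP n k p h b \<epsilon> g" using mx by (simp add: is_maxent_def)
  hence se: "simplexn n k e" and sg: "simplexn n k g" using Pe by (simp_all add: polyP_def)
  have "0 \<le> negent n k (mix t g e) - negent n k g"
    using mx polyP_mix[OF Pg Pe] t by (simp add: is_maxent_def)
  also have "\<dots> = (\<Sum>i<n. \<Sum>l<k. xlnx (mix t g e i l) - xlnx (g i l))"
    by (simp add: negent_eq_sum_xlnx sum_subtractf)
  also have "\<dots> \<le> (\<Sum>i<n. \<Sum>l<k. t * ((e i l - g i l) + (e i l - g i l) * ln (mix t g e i l)))"
    using simplexn_nonneg[OF se] simplexn_nonneg[OF sg] t
    by (intro sum_mono xlnx_convex_comb_le) (auto simp: mix_def)
  also have "\<dots> = t * (\<Sum>i<n. \<Sum>l<k. (e i l - g i l) * ln (mix t g e i l))"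
    using sum_sum_diff_eq_0[OF se sg] by (simp add: sum_distrib_left[symmetric] sum.distrib)
  finally show ?thesis using t by (simp add: zero_le_mult_iff)
qed

lemma maxent_relent_mix_le:
  assumes Pe: "polyP n k p h b \<epsilon> e" and mx: "is_maxent n k p h b \<epsilon> g" and t: "0 < t" "t \<le> 1/2"
  shows "(\<Sum>i<n. \<Sum>l<k. relent (e i l) (mix t g e i l))
    \<le> negent n k e - negent n k g + 2 * real n * t"
proof -
  have Pg: "polyP n k p h b \<epsilon> g" using mx by (simp add: is_maxent_def)
  hence se: "simplexn n k e" and sg: "simplexn n k g" using Pe by (simp_all add: polyP_def)
  have "(\<Sum>i<n. \<Sum>l<k. relent (e i l) (mix t g e i l)) \<le> (\<Sum>i<n. \<Sum>l<k.
      xlnx (e i l) - xlnx (g i l) - g i l * ln (1 - t) - (e i l - g i l) * ln (mix t g e i l))"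
    using simplexn_nonneg[OF se] simplexn_nonneg[OF sg] t
    by (intro sum_mono relent_convex_comb_le) (auto simp: mix_def)
  also have "\<dots> = negent n k e - negent n k g - real n * ln (1 - t)
      - (\<Sum>i<n. \<Sum>l<k. (e i l - g i l) * ln (mix t g e i l))"
    using simplexn_sum[OF sg]
    by (simp add: negent_eq_sum_xlnx sum_subtractf sum_distrib_right[symmetric])
  also have "\<dots> \<le> negent n k e - negent n k g + 2 * real n * t"
  proof -
    have "t * t \<le> t * (1/2)" using t by (intro mult_left_mono) auto
    hence "- ln (1 - t) \<le> 2 * t"
      using ln_one_minus_pos_lower_bound[of t] t unfolding power2_eq_square by linarith
    hence "real n * (- ln (1 - t)) \<le> real n * (2 * t)" by (intro mult_left_mono) auto
    moreover have "0 \<le> (\<Sum>i<n. \<Sum>l<k. (e i l - g i l) * ln (mix t g e i l))"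
      using maxent_first_order[OF Pe mx] t by simp
    ultimately show ?thesis by (simp add: algebra_simps)
  qed
  finally show ?thesis .
qed

lemma sum_relent_ge_entry:
  assumes se: "simplexn n k e" and sz: "simplexn n k z"
    and pos: "\<And>i l. i < n \<Longrightarrow> l < k \<Longrightarrow> 0 < e i l \<Longrightarrow> 0 < z i l"
    and "i0 < n" "l0 < k"
  shows "relent (e i0 l0) (z i0 l0) - (e i0 l0 - z i0 l0) \<le> (\<Sum>i<n. \<Sum>l<k. relent (e i l) (z i l))"
proof -
  have "relent (e i0 l0) (z i0 l0) - (e i0 l0 - z i0 l0)
      \<le> (\<Sum>i<n. \<Sum>l<k. relent (e i l) (z i l) - (e i l - z i l))"
    using simplexn_nonneg[OF se] simplexn_nonneg[OF sz] pos assms(4,5)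
    by (intro nested_sum_member_le) (auto intro: relent_ge_diff)
  also have "\<dots> = (\<Sum>i<n. \<Sum>l<k. relent (e i l) (z i l))"
    using sum_sum_diff_eq_0[OF se sz] by (simp add: sum_subtractf)
  finally show ?thesis .
qed

text \<open>If \<open>g\<close> vanished where \<open>e\<close> does not, the relative entropy of \<open>e\<close> to \<open>mix t g e\<close>
  would grow like \<open>-ln t\<close> as \<open>t \<rightarrow> 0\<close>, against the bound \<open>O(1) + 2 n t\<close> above.\<close>
lemma maxent_pos:
  assumes Pe: "polyP n k p h b \<epsilon> e" and mx: "is_maxent n k p h b \<epsilon> g"
    and il: "i < n" "l < k" and ep: "0 < e i l"
  shows "0 < g i l"
proof (rule ccontr)
  assume "\<not> 0 < g i l"
  have Pg: "polyP n k p h b \<epsilon> g" using mx by (simp add: is_maxent_def)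
  hence se: "simplexn n k e" and sg: "simplexn n k g" using Pe by (simp_all add: polyP_def)
  hence g0: "g i l = 0" using simplexn_nonneg il \<open>\<not> 0 < g i l\<close> by force
  define E B where "E = e i l" and "B = negent n k e - negent n k g"
  have bound: "- E * ln t \<le> B + real n + E" if t: "0 < t" "t \<le> 1/2" for t
  proof -
    have mix_pos: "0 < mix t g e i' l'" if "i' < n" "l' < k" "0 < e i' l'" for i' l'
      using that t simplexn_nonneg[OF sg] by (simp add: mix_def add_nonneg_pos)
    have "relent E (t * E) = - E * ln t"
      using t ep by (simp add: E_def relent_def ln_div ln_mult)
    hence "- E * ln t - (E - t * E) \<le> (\<Sum>i<n. \<Sum>l<k. relent (e i l) (mix t g e i l))"
      using sum_relent_ge_entry[OF se simplexn_mix[OF sg se] mix_pos il] t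
      by (simp add: mix_def g0 E_def)
    also have "\<dots> \<le> B + 2 * real n * t" unfolding B_def using maxent_relent_mix_le[OF Pe mx t] .
    also have "\<dots> \<le> B + real n"
      using mult_left_mono[of "2 * t" 1 "real n"] t by (simp add: mult_ac)
    finally have "- E * ln t - (E - t * E) \<le> B + real n" .
    moreover have "0 \<le> t * E" using t ep by (simp add: E_def)
    ultimately show ?thesis by linarith
  qed
  define t where "t = min (1/2) (exp (- (\<bar>B\<bar> + real n + E + 1) / E))"
  have t: "0 < t" "t \<le> 1/2" "t \<le> exp (- (\<bar>B\<bar> + real n + E + 1) / E)"
    unfolding t_def by (simp_all only: min.cobounded1 min.cobounded2) simp
  hence "ln t \<le> - (\<bar>B\<bar> + real n + E + 1) / E" by (metis ln_exp ln_le_cancel_iff exp_gt_zero)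
  hence "\<bar>B\<bar> + real n + E + 1 \<le> - E * ln t" using ep by (simp add: E_def field_simps)
  thus False using bound[OF t(1,2)] by simp
qed

lemma maxent_pythagoras:
  assumes Pe: "polyP n k p h b \<epsilon> e" and mx: "is_maxent n k p h b \<epsilon> g"
  shows "(\<Sum>i<n. \<Sum>l<k. relent (e i l) (g i l)) \<le> negent n k e - negent n k g"
proof (rule le_of_le_add_mult_small)
  have Pg: "polyP n k p h b \<epsilon> g" using mx by (simp add: is_maxent_def)
  hence se: "simplexn n k e" and sg: "simplexn n k g" using Pe by (simp_all add: polyP_def)
  define C where "C = (\<Sum>i<n. \<Sum>l<k. e i l * e i l / g i l)"
  show "0 \<le> 2 * real n + C"
    unfolding C_def using simplexn_nonneg[OF se] simplexn_nonneg[OF sg]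
    by (intro add_nonneg_nonneg sum_nonneg divide_nonneg_nonneg mult_nonneg_nonneg) auto
  fix t :: real assume t: "0 < t" "t \<le> 1/2"
  have "(\<Sum>i<n. \<Sum>l<k. relent (e i l) (g i l))
      \<le> (\<Sum>i<n. \<Sum>l<k. relent (e i l) (mix t g e i l) + t * (e i l * e i l / g i l))"
    using simplexn_nonneg[OF se] simplexn_nonneg[OF sg] maxent_pos[OF Pe mx] t
    by (intro sum_mono relent_le_relent_convex_comb) (auto simp: mix_def)
  also have "\<dots> = (\<Sum>i<n. \<Sum>l<k. relent (e i l) (mix t g e i l)) + t * C"
    by (simp add: C_def sum.distrib sum_distrib_left)
  also have "\<dots> \<le> negent n k e - negent n k g + t * (2 * real n + C)"
    using maxent_relent_mix_le[OF Pe mx t] by (simp add: algebra_simps)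
  finally show "(\<Sum>i<n. \<Sum>l<k. relent (e i l) (g i l))
      \<le> negent n k e - negent n k g + t * (2 * real n + C)" .
qed

lemma gibbs_inequality:
  assumes sg: "simplexn n k g" and qp: "\<And>i l. i < n \<Longrightarrow> l < k \<Longrightarrow> 0 < q i l"
    and q1: "\<And>i. i < n \<Longrightarrow> (\<Sum>l<k. q i l) = 1"
  shows "(\<Sum>i<n. \<Sum>l<k. g i l * ln (q i l)) \<le> negent n k g"
proof -
  have "0 = (\<Sum>i<n. \<Sum>l<k. g i l - q i l)"
    using simplexn_sum[OF sg] q1 by (simp add: sum_subtractf)
  also have "\<dots> \<le> (\<Sum>i<n. \<Sum>l<k. xlnx (g i l) - g i l * ln (q i l))"
    using qp simplexn_nonneg[OF sg] by (intro sum_mono xlnx_minus_mult_ln_ge) auto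
  finally show ?thesis by (simp add: negent_eq_sum_xlnx sum_subtractf)
qed

lemma sum_relent_eq_negent_minus:
  assumes "simplexn n k e" "\<And>i l. i < n \<Longrightarrow> l < k \<Longrightarrow> 0 < q i l"
  shows "(\<Sum>i<n. \<Sum>l<k. relent (e i l) (q i l)) = negent n k e - (\<Sum>i<n. \<Sum>l<k. e i l * ln (q i l))"
proof -
  have "relent (e i l) (q i l) = xlnx (e i l) - e i l * ln (q i l)" if "i < n" "l < k" for i l
    using simplexn_nonneg[OF assms(1) that] assms(2)[OF that] relent_eq_xlnx_minus
    by (cases "e i l = 0") (auto simp: relent_def xlnx_def)
  thus ?thesis by (simp add: negent_eq_sum_xlnx sum_subtractf)
qed

lemma dKL_eq_sum_relent:
  assumes "\<And>i l. i < n \<Longrightarrow> l < k \<Longrightarrow> 0 \<le> \<mu> i l"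
    and "\<And>i l. i < n \<Longrightarrow> l < k \<Longrightarrow> 0 < \<mu> i l \<Longrightarrow> 0 < \<nu> i l"
  shows "dKL n k \<mu> \<nu> = ereal (\<Sum>i<n. \<Sum>l<k. relent (\<mu> i l) (\<nu> i l))"
proof -
  have "klterm (\<mu> i l) (\<nu> i l) = ereal (relent (\<mu> i l) (\<nu> i l))" if "i < n" "l < k" for i l
    using assms[OF that] by (cases "\<mu> i l = 0") (auto simp: klterm_def relent_def)
  thus ?thesis by (simp add: dKL_def sum_ereal)
qed

lemma sum_exp_atheta_pos: "1 \<le> k \<Longrightarrow> 0 < (\<Sum>l<k. exp (atheta n k p h \<theta> i l))"
  by (intro sum_pos) (auto simp: lessThan_empty_iff)

lemma gtheta_pos: "1 \<le> k \<Longrightarrow> 0 < gtheta n k p h \<theta> i l"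
  unfolding gtheta_def by (intro divide_pos_pos exp_gt_zero sum_exp_atheta_pos)

lemma gtheta_sum: "1 \<le> k \<Longrightarrow> (\<Sum>l<k. gtheta n k p h \<theta> i l) = 1"
  using sum_exp_atheta_pos[of k n p h \<theta> i] by (simp add: gtheta_def sum_divide_distrib[symmetric])

lemma ln_gtheta:
  "1 \<le> k \<Longrightarrow> ln (gtheta n k p h \<theta> i l) = atheta n k p h \<theta> i l - ln (\<Sum>l'<k. exp (atheta n k p h \<theta> i l'))"
  using sum_exp_atheta_pos[of k n p h \<theta> i] by (simp add: gtheta_def ln_div)

lemma sum_mult_atheta:
  "(\<Sum>i<n. \<Sum>l<k. z i l * atheta n k p h \<theta> i l) = (\<Sum>j<p+k. \<theta> j * Aop n k p h z j)"
proof -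
  have "z i l * atheta n k p h \<theta> i l = (\<Sum>j<p+k. \<theta> j * (Amat n p h j i l * z i l))" for i l
    unfolding atheta_def sum_distrib_left by (rule sum.cong) (simp_all add: mult_ac)
  hence "(\<Sum>i<n. \<Sum>l<k. z i l * atheta n k p h \<theta> i l)
      = (\<Sum>i<n. \<Sum>l<k. \<Sum>j<p+k. \<theta> j * (Amat n p h j i l * z i l))"
    by simp
  also have "\<dots> = (\<Sum>i<n. \<Sum>j<p+k. \<Sum>l<k. \<theta> j * (Amat n p h j i l * z i l))"
    by (intro sum.cong refl sum.swap)
  also have "\<dots> = (\<Sum>j<p+k. \<Sum>i<n. \<Sum>l<k. \<theta> j * (Amat n p h j i l * z i l))"
    by (rule sum.swap)
  also have "\<dots> = (\<Sum>j<p+k. \<theta> j * Aop n k p h z j)"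
    by (simp only: Aop_def sum_distrib_left)
  finally show ?thesis .
qed

lemma sum_mult_ln_gtheta:
  assumes "1 \<le> k" "simplexn n k z"
  shows "(\<Sum>i<n. \<Sum>l<k. z i l * ln (gtheta n k p h \<theta> i l))
    = (\<Sum>j<p+k. \<theta> j * Aop n k p h z j) - (\<Sum>i<n. ln (\<Sum>l<k. exp (atheta n k p h \<theta> i l)))"
proof -
  have "(\<Sum>l<k. z i l * ln (gtheta n k p h \<theta> i l))
      = (\<Sum>l<k. z i l * atheta n k p h \<theta> i l) - ln (\<Sum>l<k. exp (atheta n k p h \<theta> i l))"
    if "i < n" for i
    using simplexn_sum[OF assms(2) that]
    by (simp add: ln_gtheta[OF assms(1)] right_diff_distrib sum_subtractf sum_distrib_right[symmetric])
  thus ?thesis by (simp add: sum_subtractf sum_mult_atheta)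
qed

lemma negent_diff_le_relent_gtheta:
  assumes k: "1 \<le> k" and se: "simplexn n k e" and sg: "simplexn n k g"
    and close: "\<And>j. j < p + k \<Longrightarrow> \<bar>Aop n k p h e j - Aop n k p h g j\<bar> \<le> c"
  shows "negent n k e - negent n k g
    \<le> (\<Sum>i<n. \<Sum>l<k. relent (e i l) (gtheta n k p h \<theta> i l)) + c * (\<Sum>j<p+k. \<bar>\<theta> j\<bar>)"
proof -
  let ?q = "gtheta n k p h \<theta>"
  have qp: "\<And>i l. 0 < ?q i l" and q1: "\<And>i. (\<Sum>l<k. ?q i l) = 1"
    using gtheta_pos[OF k] gtheta_sum[OF k] by blast+
  have "(\<Sum>i<n. \<Sum>l<k. e i l * ln (?q i l)) - (\<Sum>i<n. \<Sum>l<k. g i l * ln (?q i l))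
      = (\<Sum>j<p+k. \<theta> j * (Aop n k p h e j - Aop n k p h g j))"
    unfolding sum_mult_ln_gtheta[OF k se] sum_mult_ln_gtheta[OF k sg]
    by (simp add: right_diff_distrib sum_subtractf)
  also have "\<dots> \<le> (\<Sum>j<p+k. c * \<bar>\<theta> j\<bar>)"
  proof (rule sum_mono)
    fix j assume "j \<in> {..<p+k}"
    let ?d = "Aop n k p h e j - Aop n k p h g j"
    have "\<theta> j * ?d \<le> \<bar>\<theta> j\<bar> * \<bar>?d\<bar>" by (simp add: abs_mult[symmetric])
    also have "\<dots> \<le> \<bar>\<theta> j\<bar> * c" using close \<open>j \<in> {..<p+k}\<close> by (intro mult_left_mono) auto
    finally show "\<theta> j * ?d \<le> c * \<bar>\<theta> j\<bar>" by (simp add: mult.commute)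
  qed
  also have "\<dots> = c * (\<Sum>j<p+k. \<bar>\<theta> j\<bar>)" by (rule sum_distrib_left[symmetric])
  finally have diff: "(\<Sum>i<n. \<Sum>l<k. e i l * ln (?q i l)) - (\<Sum>i<n. \<Sum>l<k. g i l * ln (?q i l))
      \<le> c * (\<Sum>j<p+k. \<bar>\<theta> j\<bar>)" .
  have "negent n k e - negent n k g \<le> negent n k e - (\<Sum>i<n. \<Sum>l<k. g i l * ln (?q i l))"
    using gibbs_inequality[of n k g ?q, OF sg qp q1] by simp
  also have "\<dots> \<le> negent n k e - (\<Sum>i<n. \<Sum>l<k. e i l * ln (?q i l)) + c * (\<Sum>j<p+k. \<bar>\<theta> j\<bar>)"
    using diff by simp
  also have "\<dots> = (\<Sum>i<n. \<Sum>l<k. relent (e i l) (?q i l)) + c * (\<Sum>j<p+k. \<bar>\<theta> j\<bar>)"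
    using sum_relent_eq_negent_minus[of n k e ?q, OF se qp] by simp
  finally show ?thesis .
qed

lemma maxent_relent_le_relent_gtheta:
  assumes k: "1 \<le> k" and Pe: "polyP n k p h b \<epsilon> e" and mx: "is_maxent n k p h b \<epsilon> g"
    and eps: "\<And>j. j < p + k \<Longrightarrow> \<bar>\<epsilon> j\<bar> \<le> M"
  shows "(\<Sum>i<n. \<Sum>l<k. relent (e i l) (g i l))
    \<le> (\<Sum>i<n. \<Sum>l<k. relent (e i l) (gtheta n k p h \<theta> i l)) + M * (2 * (\<Sum>j<p+k. \<bar>\<theta> j\<bar>))"
proof -
  have Pg: "polyP n k p h b \<epsilon> g" using mx by (simp add: is_maxent_def)
  have close: "\<bar>Aop n k p h e j - Aop n k p h g j\<bar> \<le> 2 * M" if "j < p + k" for j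
    using Pe Pg eps[OF that] that unfolding polyP_def by fastforce
  have "(\<Sum>i<n. \<Sum>l<k. relent (e i l) (g i l)) \<le> negent n k e - negent n k g"
    using Pe mx by (rule maxent_pythagoras)
  also have "\<dots> \<le> (\<Sum>i<n. \<Sum>l<k. relent (e i l) (gtheta n k p h \<theta> i l)) + 2 * M * (\<Sum>j<p+k. \<bar>\<theta> j\<bar>)"
    using Pe Pg by (intro negent_diff_le_relent_gtheta k close) (simp_all add: polyP_def)
  finally show ?thesis by (simp add: mult_ac)
qed

lemma Aop_class_row:
  assumes "l < k"
  shows "Aop n k p h z (p + l) = (\<Sum>i<n. z i l) / real n"
proof -
  have "Amat n p h (p + l) i l' * z i l' = (if l' = l then z i l / real n else 0)" for i l'
    by (simp add: Amat_def)
  hence "(\<Sum>l'<k. Amat n p h (p + l) i l' * z i l') = z i l / real n" for i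
    using assms by simp
  thus ?thesis by (simp add: Aop_def sum_divide_distrib)
qed

lemma gds_pos:
  assumes k: "2 \<le> k" and w: "\<And>l'. l' < k \<Longrightarrow> 0 \<le> w l'" and l: "l < k" "0 < w l"
    and b: "\<And>j. j < p \<Longrightarrow> 0 < b j \<and> b j < 1"
  shows "0 < gds k p h w b i l"
proof -
  have factors_pos: "0 < b j" "0 < (1 - b j) / (real k - 1)" if "j < p" for j
    using b[OF that] k by auto
  have ghat_nonneg: "0 \<le> ghat k p h w b i l'" if "l' < k" for l'
    unfolding ghat_def using w[OF that] factors_pos
    by (intro mult_nonneg_nonneg prod_nonneg) (auto simp: less_imp_le)
  have "0 < ghat k p h w b i l"
    unfolding ghat_def using l factors_pos by (intro mult_pos_pos prod_pos) auto
  moreover have "ghat k p h w b i l \<le> (\<Sum>l'<k. ghat k p h w b i l')"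
    using l ghat_nonneg by (intro member_le_sum) auto
  ultimately show ?thesis by (simp add: gds_def)
qed

lemma dKL_gds_empirical_eq:
  assumes n: "1 \<le> n" and k: "2 \<le> k" and se: "simplexn n k \<eta>"
    and acc: "\<forall>j<p. 0 < Aop n k p h \<eta> j \<and> Aop n k p h \<eta> j < 1"
  defines "g \<equiv> gds k p h (\<lambda>l. Aop n k p h \<eta> (p + l)) (Aop n k p h \<eta>)"
  shows "dKL n k \<eta> g = ereal (\<Sum>i<n. \<Sum>l<k. relent (\<eta> i l) (g i l))"
proof (rule dKL_eq_sum_relent)
  fix i l assume il: "i < n" "l < k" and pos: "0 < \<eta> i l"
  have freq: "Aop n k p h \<eta> (p + l') = (\<Sum>i<n. \<eta> i l') / real n" if "l' < k" for l'
    using that by (rule Aop_class_row)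
  have "\<eta> i l \<le> (\<Sum>i<n. \<eta> i l)"
    using il simplexn_nonneg[OF se] by (intro member_le_sum) auto
  hence "0 < Aop n k p h \<eta> (p + l)" using freq[OF il(2)] pos n by simp
  moreover have "0 \<le> Aop n k p h \<eta> (p + l')" if "l' < k" for l'
    using freq[OF that] simplexn_nonneg[OF se] that by (auto intro!: divide_nonneg_nonneg sum_nonneg)
  ultimately show "0 < g i l" unfolding g_def using k il acc by (intro gds_pos) auto
qed (use simplexn_nonneg[OF se] in auto)

theorem lemma7:
  fixes n k p :: nat
    and h :: "nat \<Rightarrow> nat \<Rightarrow> nat option"
    and \<eta> g\<^sub>b\<^sub>f g\<^sub>d\<^sub>s :: "nat \<Rightarrow> nat \<Rightarrow> real"
    and b \<epsilon> \<theta>s :: "nat \<Rightarrow> real"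
  assumes "n \<ge> 1" and "k \<ge> 2" and "p \<ge> 1"
    and "\<forall>j<p. \<forall>i<n. \<forall>l. h j i = Some l \<longrightarrow> l < k"
    and "\<forall>j<p. nrule n h j \<ge> 1"
    and "simplexn n k \<eta>"
    and "\<forall>j<p+k. 0 \<le> \<epsilon> j \<and> b j - \<epsilon> j \<le> Aop n k p h \<eta> j \<and> Aop n k p h \<eta> j \<le> b j + \<epsilon> j"
    and "\<forall>\<theta>. dKL n k \<eta> (gtheta n k p h \<theta>s) \<le> dKL n k \<eta> (gtheta n k p h \<theta>)"
    and "\<exists>j<p+k. \<theta>s j \<noteq> 0"
    and "is_maxent n k p h b \<epsilon> g\<^sub>b\<^sub>f"
    and "is_ocds n k p h g\<^sub>d\<^sub>s"
    and "\<forall>j<p. 0 < Aop n k p h \<eta> j \<and> Aop n k p h \<eta> j < 1"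
    and "ereal (Max ((\<lambda>j. \<bar>\<epsilon> j\<bar>) ` {..<p+k})) \<le>
      (dKL n k \<eta> (gds k p h (\<lambda>l. Aop n k p h \<eta> (p + l)) (Aop n k p h \<eta>))
        - dKL n k \<eta> (gtheta n k p h \<theta>s)
        + dKL n k \<eta> g\<^sub>d\<^sub>s
        - dKL n k \<eta> (gds k p h (\<lambda>l. Aop n k p h \<eta> (p + l)) (Aop n k p h \<eta>)))
      / ereal (2 * (\<Sum>j<p+k. \<bar>\<theta>s j\<bar>))"
  shows "dKL n k \<eta> g\<^sub>b\<^sub>f \<le> dKL n k \<eta> g\<^sub>d\<^sub>s"
proof -
  define M where "M = Max ((\<lambda>j. \<bar>\<epsilon> j\<bar>) ` {..<p+k})"
  define S where "S = (\<Sum>j<p+k. \<bar>\<theta>s j\<bar>)"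
  define D where "D = (\<Sum>i<n. \<Sum>l<k. relent (\<eta> i l) (gtheta n k p h \<theta>s i l))"
  have P\<eta>: "polyP n k p h b \<epsilon> \<eta>" using assms(6,7) by (simp add: polyP_def)
  have "0 < S"
  proof -
    obtain j where "j < p + k" "\<theta>s j \<noteq> 0" using assms(9) by blast
    hence "0 < \<bar>\<theta>s j\<bar>" "\<bar>\<theta>s j\<bar> \<le> S" unfolding S_def by (auto intro!: member_le_sum)
    thus ?thesis by simp
  qed
  have kl_star: "dKL n k \<eta> (gtheta n k p h \<theta>s) = ereal D"
    unfolding D_def using simplexn_nonneg[OF assms(6)] gtheta_pos assms(2)
    by (intro dKL_eq_sum_relent) auto
  have "dKL n k \<eta> g\<^sub>b\<^sub>f = ereal (\<Sum>i<n. \<Sum>l<k. relent (\<eta> i l) (g\<^sub>b\<^sub>f i l))"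
    using simplexn_nonneg[OF assms(6)] maxent_pos[OF P\<eta> assms(10)] by (intro dKL_eq_sum_relent)
  also have "\<dots> \<le> ereal (D + M * (2 * S))"
    using maxent_relent_le_relent_gtheta[OF _ P\<eta> assms(10), of M \<theta>s] assms(2)
    unfolding D_def S_def M_def by (simp add: Max_ge)
  also have "\<dots> \<le> dKL n k \<eta> g\<^sub>d\<^sub>s"
  proof (rule ereal_add_mult_le_of_le_divide)
    show "ereal M \<le> (dKL n k \<eta> g\<^sub>d\<^sub>s - ereal D) / ereal (2 * S)"
      using assms(13) unfolding kl_star dKL_gds_empirical_eq[OF assms(1,2,6,12)]
        ereal_diff_add_diff_cancel M_def S_def .
  qed (use \<open>0 < S\<close> in simp)
  finally show ?thesis .
qed

end
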